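(* Consider learning a concept $c$ with the 1-nearest neighbor rule on a metric space $(\mathcal{X},\rho)$. If $U\subset\mathcal{X}$ is a mutually-labeling set for $c$ and $x_t\in U$ for some time $t$, then for every $\tau>t$ the hypothesis $h_\tau$ satisfies $h_\tau(x)=c(x)$ for all $x\in U$. Consequently $U$ is a locally learned set for $c$.
   Context: Margin: $m_c(x)=\inf_{x':c(x')\ne c(x)}\rho(x,x')$. A set $U$ is mutually-labeling for $c$ if $\rho(x,x')<m_c(x)$ for all $x,x'\in U$. The 1-nearest neighbor hypothesis at time $\tau$ is $h_\tau(x)=c(x_{\sigma})$ with $\sigma\in\arg\min_{s<\tau}\rho(x,x_s)$ (ties arbitrary). A set $U$ is locally learned for $c$ if for every sequence $(x_t)_t$, either $x_t\in U$ finitely often or $\sup_{x\in U}\mathcal{E}_t(x)\to0$, where $\mathcal{E}_t(x)=\ell(x,c(x),h_t(x))$ for a non-negative bounded loss with $\ell(x,y,y)=0$. *)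

theory Defs
  imports "HOL-Analysis.Analysis"
begin

text \<open>Margin of x for concept c (value in ereal, so that it is +infinity when
  no point carries a different label).\<close>
definition margin :: "('a::metric_space \<Rightarrow> 'b) \<Rightarrow> 'a \<Rightarrow> ereal" where
  "margin c x = (INF x'\<in>{x'. c x' \<noteq> c x}. ereal (dist x x'))"

definition mutually_labeling :: "('a::metric_space \<Rightarrow> 'b) \<Rightarrow> 'a set \<Rightarrow> bool" where
  "mutually_labeling c U \<longleftrightarrow> (\<forall>x\<in>U. \<forall>x'\<in>U. ereal (dist x x') < margin c x)"

definition is_1nn_hyp :: "('a::metric_space \<Rightarrow> 'b) \<Rightarrow> (nat \<Rightarrow> 'a) \<Rightarrow> (nat \<Rightarrow> 'a \<Rightarrow> 'b) \<Rightarrow> bool" where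
  "is_1nn_hyp c xs h \<longleftrightarrow>
     (\<forall>\<tau>>0. \<forall>x. \<exists>\<sigma><\<tau>. (\<forall>s<\<tau>. dist x (xs \<sigma>) \<le> dist x (xs s)) \<and> h \<tau> x = c (xs \<sigma>))"

definition admissible_loss :: "('a \<Rightarrow> 'b \<Rightarrow> 'b \<Rightarrow> real) \<Rightarrow> bool" where
  "admissible_loss l \<longleftrightarrow> (\<forall>x y y'. 0 \<le> l x y y') \<and> (\<exists>B. \<forall>x y y'. l x y y' \<le> B)
      \<and> (\<forall>x y. l x y y = 0)"

definition locally_learned :: "('a \<Rightarrow> 'b \<Rightarrow> 'b \<Rightarrow> real) \<Rightarrow> ('a::metric_space \<Rightarrow> 'b) \<Rightarrow> 'a set \<Rightarrow> bool" where
  "locally_learned l c U \<longleftrightarrow>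
     (\<forall>xs h. is_1nn_hyp c xs h \<longrightarrow>
        finite {t. xs t \<in> U} \<or> ((\<lambda>t. SUP x\<in>U. l x (c x) (h t x)) \<longlonglongrightarrow> 0))"

end

theory Submission
  imports Defs
begin

text \<open>Once some point of the mutually-labeling set \<open>U\<close> has been seen, every \<open>x \<in> U\<close>
  has a previous point within distance \<open>\<rho>(x, x\<^sub>t) < m\<^sub>c(x)\<close>, so its nearest neighbour
  is strictly inside the margin of \<open>x\<close> and carries the label \<open>c x\<close>. Hence from then on the
  1-NN hypothesis is exact on \<open>U\<close> and the supremum of the losses over \<open>U\<close> is eventually \<open>0\<close>.\<close>

lemma margin_le_dist:
  assumes "c x' \<noteq> c x"
  shows "margin c x \<le> ereal (dist x x')"
  using assms unfolding margin_def by (auto intro: INF_lower)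

lemma label_eq_if_dist_lt_margin:
  assumes "ereal (dist x x') < margin c x"
  shows "c x' = c x"
  using assms margin_le_dist[of c x' x] by (meson not_le)

lemma is_1nn_hypD:
  assumes "is_1nn_hyp c xs h" and "t < \<tau>"
  obtains \<sigma> where "\<sigma> < \<tau>" and "dist x (xs \<sigma>) \<le> dist x (xs t)" and "h \<tau> x = c (xs \<sigma>)"
  using assms unfolding is_1nn_hyp_def by (metis gr_zeroI less_zeroE)

lemma is_1nn_hyp_eq_on_mutually_labeling:
  assumes ml: "mutually_labeling c U" and "xs t \<in> U" and h: "is_1nn_hyp c xs h"
    and "t < \<tau>" and "x \<in> U"
  shows "h \<tau> x = c x"
proof -
  obtain \<sigma> where le: "dist x (xs \<sigma>) \<le> dist x (xs t)" and h\<sigma>: "h \<tau> x = c (xs \<sigma>)"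
    using is_1nn_hypD[OF h \<open>t < \<tau>\<close>] by blast
  have "ereal (dist x (xs t)) < margin c x"
    using ml \<open>x \<in> U\<close> \<open>xs t \<in> U\<close> unfolding mutually_labeling_def by blast
  then have "ereal (dist x (xs \<sigma>)) < margin c x"
    using le by (meson ereal_less_eq(3) le_less_trans)
  then show ?thesis
    using h\<sigma> label_eq_if_dist_lt_margin by metis
qed

lemma locally_learned_if_mutually_labeling:
  assumes ml: "mutually_labeling c U" and l: "admissible_loss l"
  shows "locally_learned l c U"
  unfolding locally_learned_def
proof (intro allI impI)
  fix xs h assume h: "is_1nn_hyp c xs h"
  show "finite {t. xs t \<in> U} \<or> (\<lambda>t. SUP x\<in>U. l x (c x) (h t x)) \<longlonglongrightarrow> 0"
  proof (cases "\<exists>t. xs t \<in> U")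
    case False
    then show ?thesis by simp
  next
    case True
    then obtain t where t: "xs t \<in> U" by blast
    have "(SUP x\<in>U. l x (c x) (h \<tau> x)) = 0" if "Suc t \<le> \<tau>" for \<tau>
    proof -
      have "\<forall>x\<in>U. h \<tau> x = c x"
        using is_1nn_hyp_eq_on_mutually_labeling[OF ml t h] that by simp
      then have "(\<lambda>x. l x (c x) (h \<tau> x)) ` U = {0}"
        using l t unfolding admissible_loss_def by auto
      then show ?thesis by simp
    qed
    then have "(\<lambda>t. SUP x\<in>U. l x (c x) (h t x)) \<longlonglongrightarrow> 0"
      by (intro tendsto_eventually eventually_sequentiallyI)
    then show ?thesis by simp
  qed
qed

theorem lemma5:
  fixes c :: "'a::metric_space \<Rightarrow> 'b" and U :: "'a set"
    and xs :: "nat \<Rightarrow> 'a" and t :: nat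
  assumes "mutually_labeling c U"
  shows "(xs t \<in> U \<longrightarrow> (\<forall>h. is_1nn_hyp c xs h \<longrightarrow> (\<forall>\<tau>>t. \<forall>x\<in>U. h \<tau> x = c x)))
       \<and> (\<forall>l :: 'a \<Rightarrow> 'b \<Rightarrow> 'b \<Rightarrow> real. admissible_loss l \<longrightarrow> locally_learned l c U)"
  using is_1nn_hyp_eq_on_mutually_labeling[OF assms]
    locally_learned_if_mutually_labeling[OF assms] by blast

end
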